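(* Let $(L,\le,(\sqsubseteq_\alpha)_{\alpha<\kappa})$ be a model of Axioms 1–4, where $\kappa>0$ is an arbitrary ordinal. Let $f:L\to L$ be $\alpha$-monotonic for every ordinal $\alpha<\kappa$. Then $f$ has a least pre-fixed point with respect to $\sqsubseteq$, that is, an element $x$ with $f(x)\sqsubseteq x$ such that $x\sqsubseteq z$ whenever $f(z)\sqsubseteq z$. This element is also the least fixed point of $f$ with respect to $\sqsubseteq$.
   Context: Setting (model of Axioms 1–4). Let $(L,\le)$ be a complete lattice with join operation $\bigvee$ and least element $\perp$. Let $\kappa>0$ be an ordinal, and for each ordinal $\alpha<\kappa$ let $\sqsubseteq_\alpha$ be a preorder on $L$. Derived relations: - $x=_\alpha y$ means $x\sqsubseteq_\alpha y$ and $y\sqsubseteq_\alpha x$. - $x\sqsubset_\alpha y$ means $x\sqsubseteq_\alpha y$ and not $x=_\alpha y$. - $\sqsubset=\bigcup_{\alpha<\kappa}\sqsubset_\alpha$. - $x\sqsubseteq y$ means $x\sqsubset y$ or $x=y$. Derived set, for $x\in L$ and $\alpha<\kappa$: $(x]_\alpha=\{y\in L:\forall\beta<\alpha,\ x=_\beta y\}$. For a set $X$, $X\sqsubseteq_\alpha y$ means $x\sqsubseteq_\alpha y$ for all $x\in X$. The structure is a model of Axioms 1–4 if: - (A1) for all $\alpha<\beta<\kappa$, $x\sqsubseteq_\beta y$ implies $x=_\alpha y$; - (A2) $\bigcap_{\alpha<\kappa}=_\alpha$ is the identity relation on $L$; - (A3) for every $x\in L$, every $\alpha<\kappa$ and every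 $X\subseteq(x]_\alpha$ there is $y\in(x]_\alpha$ with $X\sqsubseteq_\alpha y$ such that for all $z\in(x]_\alpha$ with $X\sqsubseteq_\alpha z$ we have $y\sqsubseteq_\alpha z$ and $y\le z$; - (A4) for every nonempty $X\subseteq L$, every $\alpha<\kappa$ and every $y\in L$, if $y=_\alpha x$ for all $x\in X$ then $y=_\alpha\bigvee X$. A function $f:L\to L$ is $\alpha$-monotonic if $x\sqsubseteq_\alpha y$ implies $f(x)\sqsubseteq_\alpha f(y)$. *)

theory Defs
  imports Main
begin

text \<open>Ordinals below kappa (kappa > 0) are represented by the elements of a
  (nonempty) type 'i with a well-order; every nonempty well-ordered set is
  order-isomorphic to a nonzero ordinal and vice versa.
  R a x y stands for x \<sqsubseteq>_a y.\<close>

definition eq_at :: "('i \<Rightarrow> 'a \<Rightarrow> 'a \<Rightarrow> bool) \<Rightarrow> 'i \<Rightarrow> 'a \<Rightarrow> 'a \<Rightarrow> bool" where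
  "eq_at R a x y \<longleftrightarrow> R a x y \<and> R a y x"

definition lt_at :: "('i \<Rightarrow> 'a \<Rightarrow> 'a \<Rightarrow> bool) \<Rightarrow> 'i \<Rightarrow> 'a \<Rightarrow> 'a \<Rightarrow> bool" where
  "lt_at R a x y \<longleftrightarrow> R a x y \<and> \<not> eq_at R a x y"

definition lt_all :: "('i \<Rightarrow> 'a \<Rightarrow> 'a \<Rightarrow> bool) \<Rightarrow> 'a \<Rightarrow> 'a \<Rightarrow> bool" where
  "lt_all R x y \<longleftrightarrow> (\<exists>a. lt_at R a x y)"

definition le_all :: "('i \<Rightarrow> 'a \<Rightarrow> 'a \<Rightarrow> bool) \<Rightarrow> 'a \<Rightarrow> 'a \<Rightarrow> bool" where
  "le_all R x y \<longleftrightarrow> lt_all R x y \<or> x = y"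

definition down_at :: "('i::wellorder \<Rightarrow> 'a \<Rightarrow> 'a \<Rightarrow> bool) \<Rightarrow> 'a \<Rightarrow> 'i \<Rightarrow> 'a set" where
  "down_at R x a = {y. \<forall>b<a. eq_at R b x y}"

definition model_axioms :: "('i::wellorder \<Rightarrow> 'a::complete_lattice \<Rightarrow> 'a \<Rightarrow> bool) \<Rightarrow> bool" where
  "model_axioms R \<longleftrightarrow>
    (\<forall>a. (\<forall>x. R a x x) \<and> (\<forall>x y z. R a x y \<longrightarrow> R a y z \<longrightarrow> R a x z)) \<and>
    (\<forall>a b x y. a < b \<longrightarrow> R b x y \<longrightarrow> eq_at R a x y) \<and>
    (\<forall>x y. (\<forall>a. eq_at R a x y) \<longrightarrow> x = y) \<and>
    (\<forall>x a X. X \<subseteq> down_at R x a \<longrightarrow>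
       (\<exists>y\<in>down_at R x a. (\<forall>w\<in>X. R a w y) \<and>
          (\<forall>z\<in>down_at R x a. (\<forall>w\<in>X. R a w z) \<longrightarrow> R a y z \<and> y \<le> z))) \<and>
    (\<forall>X a y. X \<noteq> {} \<longrightarrow> (\<forall>x\<in>X. eq_at R a y x) \<longrightarrow> eq_at R a y (Sup X))"

definition mono_at :: "('i \<Rightarrow> 'a \<Rightarrow> 'a \<Rightarrow> bool) \<Rightarrow> 'i \<Rightarrow> ('a \<Rightarrow> 'a) \<Rightarrow> bool" where
  "mono_at R a f \<longleftrightarrow> (\<forall>x y. R a x y \<longrightarrow> R a (f x) (f y))"

end

theory Submission
  imports Defs
begin

text \<open>By transfinite recursion, build a sequence with s(a) the Knaster--Tarski least
  pre-fixed point of f, taken for \<sqsubseteq>_a inside the stratum of elements agreeing with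
  every earlier s(b) at level b (Axiom 3 supplies these least upper bounds, and
  \<alpha>-monotonicity makes the stratum f-closed). The sequence is \<le>-increasing, so by
  Axiom 4 its supremum x agrees with s(b) at every level b; hence f x = x by Axiom 2.
  A pre-fixed point z \<noteq> x first differs from x at some level a; there z lies in the
  stratum of s(a) and is a-pre-fixed, so x =_a s(a) \<sqsubseteq>_a z, i.e. x \<sqsubset>_a z.\<close>

locale stratified_model =
  fixes R :: "'i::wellorder \<Rightarrow> 'a::complete_lattice \<Rightarrow> 'a \<Rightarrow> bool"
  assumes model: "model_axioms R"
begin

definition lub_at :: "'a set \<Rightarrow> 'i \<Rightarrow> 'a set \<Rightarrow> 'a \<Rightarrow> bool" where
  "lub_at D a X y \<longleftrightarrow> y \<in> D \<and> (\<forall>w\<in>X. R a w y) \<and>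
     (\<forall>z\<in>D. (\<forall>w\<in>X. R a w z) \<longrightarrow> R a y z \<and> y \<le> z)"

lemma refl_at: "R a x x"
  and trans_at: "R a x y \<Longrightarrow> R a y z \<Longrightarrow> R a x z"
  and eq_at_below: "a < b \<Longrightarrow> R b x y \<Longrightarrow> eq_at R a x y"
  and eq_at_all_imp_eq: "(\<And>a. eq_at R a x y) \<Longrightarrow> x = y"
  and eq_at_Sup: "X \<noteq> {} \<Longrightarrow> (\<And>x. x \<in> X \<Longrightarrow> eq_at R a y x) \<Longrightarrow> eq_at R a y (Sup X)"
  using model unfolding model_axioms_def by simp_all

lemma lub_at_exists:
  assumes "X \<subseteq> down_at R u a"
  shows "\<exists>y. lub_at (down_at R u a) a X y"
proof -
  from model have "\<forall>u a X. X \<subseteq> down_at R u a \<longrightarrow> (\<exists>y\<in>down_at R u a. (\<forall>w\<in>X. R a w y) \<and>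
      (\<forall>z\<in>down_at R u a. (\<forall>w\<in>X. R a w z) \<longrightarrow> R a y z \<and> y \<le> z))"
    unfolding model_axioms_def by (elim conjE)
  with assms show ?thesis
    unfolding lub_at_def by blast
qed

lemma eq_at_refl: "eq_at R a x x"
  by (simp add: eq_at_def refl_at)

lemma eq_at_sym: "eq_at R a x y \<Longrightarrow> eq_at R a y x"
  by (simp add: eq_at_def)

lemma eq_at_trans [trans]: "eq_at R a x y \<Longrightarrow> eq_at R a y z \<Longrightarrow> eq_at R a x z"
  unfolding eq_at_def using trans_at by blast

lemma lub_at_le_eq_at:
  assumes lub: "lub_at D a X y" and "z \<in> D" and "eq_at R a y z"
  shows "y \<le> z"
proof -
  have "R a w z" if "w \<in> X" for w
    using lub that \<open>eq_at R a y z\<close> trans_at unfolding lub_at_def eq_at_def by blast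
  with lub \<open>z \<in> D\<close> show ?thesis
    unfolding lub_at_def by blast
qed

lemma R_at_of_le_all:
  assumes "le_all R x y" and "\<And>b. b < a \<Longrightarrow> eq_at R b x y"
  shows "R a x y"
proof (cases "x = y")
  case True
  then show ?thesis by (simp add: refl_at)
next
  case False
  then obtain c where c: "lt_at R c x y"
    using assms(1) unfolding le_all_def lt_all_def by blast
  consider "a < c" | "c = a" | "c < a"
    using less_linear by blast
  then show ?thesis
  proof cases
    case 1
    then show ?thesis using c eq_at_below unfolding lt_at_def eq_at_def by blast
  next
    case 2
    then show ?thesis using c unfolding lt_at_def by simp
  next
    case 3
    then show ?thesis using c assms(2) unfolding lt_at_def by blast
  qed
qed

lemma first_difference:
  assumes "x \<noteq> y"
  obtains a where "\<not> eq_at R a x y" and "\<And>b. b < a \<Longrightarrow> eq_at R b x y"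
proof -
  have "\<exists>a. \<not> eq_at R a x y"
    using assms eq_at_all_imp_eq by blast
  then show thesis
    using that[of "LEAST a. \<not> eq_at R a x y"] by (metis LeastI not_less_Least)
qed

text \<open>Restricting to the tail above b makes every member =_b-equal to s(b), so
  Axiom 4 applies; monotonicity shows the tail has the same supremum.\<close>

lemma eq_at_Sup_of_chain:
  assumes "b \<in> B"
    and mono: "\<And>c. c \<in> B \<Longrightarrow> c < b \<Longrightarrow> s c \<le> s b"
    and tail: "\<And>c. c \<in> B \<Longrightarrow> b < c \<Longrightarrow> eq_at R b (s b) (s c)"
  shows "eq_at R b (s b) (Sup (s ` B))"
proof -
  let ?T = "s ` {c\<in>B. b \<le> c}"
  have "eq_at R b (s b) (Sup ?T)"
  proof (rule eq_at_Sup)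
    show "?T \<noteq> {}" using \<open>b \<in> B\<close> by blast
    show "eq_at R b (s b) x" if "x \<in> ?T" for x
      using that tail eq_at_refl by (force simp: order_le_less)
  qed
  moreover have "Sup ?T = Sup (s ` B)"
  proof (rule antisym)
    show "Sup ?T \<le> Sup (s ` B)" by (rule Sup_subset_mono) blast
    have "s c \<le> Sup ?T" if "c \<in> B" for c
    proof (cases "b \<le> c")
      case True
      then show ?thesis using that by (auto intro: Sup_upper)
    next
      case False
      then have "s c \<le> s b" using mono that by simp
      also have "s b \<le> Sup ?T" using \<open>b \<in> B\<close> by (auto intro: Sup_upper)
      finally show ?thesis .
    qed
    then show "Sup (s ` B) \<le> Sup ?T" by (auto intro: Sup_least)
  qed
  ultimately show ?thesis by simp
qed

definition stratum :: "('i \<Rightarrow> 'a) \<Rightarrow> 'i \<Rightarrow> 'a set" where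
  "stratum s a = {y. \<forall>b<a. eq_at R b (s b) y}"

lemma stratum_eq_down_at: "u \<in> stratum s a \<Longrightarrow> stratum s a = down_at R u a"
  unfolding stratum_def down_at_def using eq_at_trans eq_at_sym by blast

lemma stratum_antimono: "b < c \<Longrightarrow> y \<in> stratum s c \<Longrightarrow> y \<in> stratum s b"
  unfolding stratum_def by simp

end

locale monotone_map_on_model = stratified_model R
  for R :: "'i::wellorder \<Rightarrow> 'a::complete_lattice \<Rightarrow> 'a \<Rightarrow> bool" +
  fixes f :: "'a \<Rightarrow> 'a"
  assumes mono: "\<And>a. mono_at R a f"
begin

lemma mono_at_f: "R a x y \<Longrightarrow> R a (f x) (f y)"
  using mono unfolding mono_at_def by blast

lemma eq_at_f: "eq_at R a x y \<Longrightarrow> eq_at R a (f x) (f y)"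
  unfolding eq_at_def using mono_at_f by blast

definition least_prefixed_at :: "'a set \<Rightarrow> 'i \<Rightarrow> 'a \<Rightarrow> bool" where
  "least_prefixed_at D a = lub_at D a {w\<in>D. \<forall>p\<in>D. R a (f p) p \<longrightarrow> R a w p}"

lemma least_prefixed_at_le:
  "least_prefixed_at D a y \<Longrightarrow> p \<in> D \<Longrightarrow> R a (f p) p \<Longrightarrow> R a y p"
  unfolding least_prefixed_at_def lub_at_def by auto

lemma least_prefixed_at_fixed:
  assumes lp: "least_prefixed_at D a y" and closed: "\<And>x. x \<in> D \<Longrightarrow> f x \<in> D"
  shows "eq_at R a (f y) y"
proof -
  have "y \<in> D" using lp unfolding least_prefixed_at_def lub_at_def by blast
  have "R a (f y) p" if "p \<in> D" and "R a (f p) p" for p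
    using least_prefixed_at_le[OF lp that] mono_at_f trans_at that(2) by blast
  then have "R a (f y) y"
    using lp closed[OF \<open>y \<in> D\<close>] unfolding least_prefixed_at_def lub_at_def by blast
  moreover have "R a y (f y)"
    using least_prefixed_at_le[OF lp] closed \<open>y \<in> D\<close> mono_at_f[OF \<open>R a (f y) y\<close>] by blast
  ultimately show ?thesis by (simp add: eq_at_def)
qed

lemma stratum_closed:
  assumes "\<And>b. b < a \<Longrightarrow> eq_at R b (f (s b)) (s b)" and "y \<in> stratum s a"
  shows "f y \<in> stratum s a"
  using assms eq_at_trans eq_at_sym eq_at_f unfolding stratum_def by blast

definition approx :: "'i \<Rightarrow> 'a" where
  "approx = wfrec {(x, y). x < y} (\<lambda>s a. SOME y. least_prefixed_at (stratum s a) a y)"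

lemma approx_unfold: "approx a = (SOME y. least_prefixed_at (stratum approx a) a y)"
proof -
  have "stratum (cut approx {(x, y). x < y} a) a = stratum approx a"
    unfolding stratum_def by (auto simp: cut_apply)
  then show ?thesis
    unfolding approx_def by (subst wfrec[OF wf]) simp
qed

lemma approx_mem_stratum:
  "least_prefixed_at (stratum approx a) a (approx a) \<Longrightarrow> approx a \<in> stratum approx a"
  unfolding least_prefixed_at_def lub_at_def by blast

lemma approx_le:
  assumes "least_prefixed_at (stratum approx b) b (approx b)"
    and "least_prefixed_at (stratum approx c) c (approx c)" and "b < c"
  shows "approx b \<le> approx c"
proof (rule lub_at_le_eq_at[OF assms(1)[unfolded least_prefixed_at_def]])
  show "approx c \<in> stratum approx b"
    using stratum_antimono[OF \<open>b < c\<close> approx_mem_stratum[OF assms(2)]] .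
  show "eq_at R b (approx b) (approx c)"
    using approx_mem_stratum[OF assms(2)] \<open>b < c\<close> unfolding stratum_def by blast
qed

lemma eq_at_Sup_approx:
  assumes "\<And>c. c \<in> B \<Longrightarrow> least_prefixed_at (stratum approx c) c (approx c)" and "b \<in> B"
  shows "eq_at R b (approx b) (Sup (approx ` B))"
proof (rule eq_at_Sup_of_chain[OF \<open>b \<in> B\<close>])
  show "approx c \<le> approx b" if "c \<in> B" "c < b" for c
    using approx_le assms that by blast
  show "eq_at R b (approx b) (approx c)" if "c \<in> B" "b < c" for c
    using approx_mem_stratum assms(1) that unfolding stratum_def by blast
qed

lemma approx_least_prefixed_and_fixed:
  "least_prefixed_at (stratum approx a) a (approx a) \<and> eq_at R a (f (approx a)) (approx a)"
proof (induction a rule: less_induct)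
  case (less a)
  let ?D = "stratum approx a"
  have "Sup (approx ` {b. b < a}) \<in> ?D"
    using eq_at_Sup_approx[of "{b. b < a}"] less unfolding stratum_def by blast
  then have "\<exists>y. least_prefixed_at ?D a y"
    unfolding least_prefixed_at_def using lub_at_exists stratum_eq_down_at
    by (metis (no_types, lifting) mem_Collect_eq subsetI)
  then have lp: "least_prefixed_at ?D a (approx a)"
    unfolding approx_unfold[of a] by (rule someI_ex)
  moreover have "eq_at R a (f (approx a)) (approx a)"
    using least_prefixed_at_fixed[OF lp] stratum_closed less by blast
  ultimately show ?case ..
qed

definition limit :: 'a where
  "limit = Sup (range approx)"

lemma eq_at_approx_limit: "eq_at R b (approx b) limit"
  unfolding limit_def using eq_at_Sup_approx approx_least_prefixed_and_fixed by blast

lemma f_limit: "f limit = limit"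
proof (rule eq_at_all_imp_eq)
  fix b
  have "eq_at R b (f limit) (f (approx b))"
    using eq_at_f eq_at_sym eq_at_approx_limit by blast
  also have "eq_at R b (f (approx b)) (approx b)"
    using approx_least_prefixed_and_fixed by blast
  also have "eq_at R b (approx b) limit"
    by (rule eq_at_approx_limit)
  finally show "eq_at R b (f limit) limit" .
qed

lemma limit_le_all_prefixed:
  assumes "le_all R (f z) z"
  shows "le_all R limit z"
proof (cases "z = limit")
  case True
  then show ?thesis by (simp add: le_all_def)
next
  case False
  then obtain a where diff: "\<not> eq_at R a z limit" and agree: "\<And>b. b < a \<Longrightarrow> eq_at R b z limit"
    using first_difference by metis
  have z_mem: "z \<in> stratum approx a"
    unfolding stratum_def using agree eq_at_approx_limit eq_at_sym eq_at_trans by blast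
  have "eq_at R b (f z) z" if "b < a" for b
    using z_mem that approx_least_prefixed_and_fixed eq_at_f eq_at_sym eq_at_trans
    unfolding stratum_def by (metis mem_Collect_eq)
  then have "R a (f z) z"
    using R_at_of_le_all assms by blast
  then have "R a (approx a) z"
    using least_prefixed_at_le approx_least_prefixed_and_fixed z_mem by blast
  then have "R a limit z"
    using eq_at_approx_limit[of a] trans_at unfolding eq_at_def by blast
  with diff show ?thesis
    unfolding le_all_def lt_all_def lt_at_def eq_at_def by blast
qed

end

theorem mainTheorem2:
  fixes R :: "'i::wellorder \<Rightarrow> 'a::complete_lattice \<Rightarrow> 'a \<Rightarrow> bool"
    and f :: "'a \<Rightarrow> 'a"
  assumes "model_axioms R"
    and "\<And>a. mono_at R a f"
  shows "\<exists>x. le_all R (f x) x \<and> (\<forall>z. le_all R (f z) z \<longrightarrow> le_all R x z)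
             \<and> f x = x \<and> (\<forall>z. f z = z \<longrightarrow> le_all R x z)"
proof -
  interpret monotone_map_on_model R f
    using assms by unfold_locales
  show ?thesis
    using f_limit limit_le_all_prefixed by (intro exI[of _ limit]) (auto simp: le_all_def)
qed

end
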